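(* Let $p\in(0,1/2)$, $\beta<0$, $\alpha=\frac{2}{2-p}$, $\gamma_\beta=\big[\frac{3}{|\beta|(p+1)}\big]^{1/3}$, $q\in(\frac{p+1}{3},1)$ and $\delta>0$. Let $\zeta\in C([0,\delta])$ satisfy: - $\zeta(0)=0$; - $|\zeta(\varphi)-\gamma_\beta\varphi^{(p+1)/3}|\le\varphi^q$ on $[0,\delta]$; - on $(0,\delta]$, $$\zeta'=\frac{\alpha^2\zeta+\varphi^p\zeta^{-1}}{\alpha(\alpha-1)\varphi-\beta\zeta}\qquad(\ast).$$ Then $\zeta$ extends to a solution of $(\ast)$ on $(0,\infty)$ that is positive and monotone increasing.
   Context: Such a $\zeta$ exists (as a fixed point of the map defined by $\zeta'=(\alpha^2\xi+\varphi^p\xi^{-1})/(\alpha(\alpha-1)\varphi-\beta\xi)$, $\zeta(0)=0$) when $q$ is close to $1$ and $\delta$ is small. *)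

theory Defs
  imports "HOL-Analysis.Analysis"
begin

end

theory Submission
  imports Defs
begin

(* The asymptotics zeta ~ gamma phi^((p+1)/3) make zeta positive near 0, and zeta cannot reach
   zero later on because the right-hand side of the equation is positive wherever zeta is.
   Beyond delta, the right-hand side with z replaced by max z (zeta delta) is bounded and globally
   Lipschitz in z, so a global solution on [delta, oo) starting at zeta delta exists by Banach's
   fixed point theorem in an exponentially weighted sup norm; this solution increases, hence never
   feels the truncation. Gluing it to zeta gives the extension, which is increasing because its
   derivative is positive. *)

lemma integral_atLeast_has_real_derivative:
  fixes g :: "real \<Rightarrow> real"
  assumes "continuous_on {a..} g" "a \<le> x"
  shows "((\<lambda>y. integral {a..y} g) has_real_derivative g x) (at x within {a..})"
proof -
  have "continuous_on {a..x+1} g" using assms(1) by (rule continuous_on_subset) auto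
  then have "((\<lambda>y. integral {a..y} g) has_real_derivative g x) (at x within {a..x+1})"
    by (rule integral_has_real_derivative) (use assms in auto)
  moreover have "at x within {a..x+1} = at x within {a..}"
    by (rule at_within_nhd[where S="{..<x+1}"]) auto
  ultimately show ?thesis by simp
qed

lemma continuous_on_integral_max:
  fixes g :: "real \<Rightarrow> real"
  assumes "continuous_on {a..} g"
  shows "continuous_on UNIV (\<lambda>t. integral {a..max a t} g)"
proof -
  have "continuous_on {a..} (\<lambda>y. integral {a..y} g)"
    unfolding continuous_on_eq_continuous_within
    using integral_atLeast_has_real_derivative[OF assms] by (meson DERIV_continuous atLeast_iff)
  then show ?thesis
    by (rule continuous_on_compose2[of _ _ UNIV "\<lambda>t. max a t"]) (auto intro!: continuous_intros)
qed

lemma exp_affine_has_integral: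
  fixes K :: real
  assumes "K > 0" "a \<le> c"
  shows "((\<lambda>s. exp (K * (s - a))) has_integral (exp (K * (c - a)) - 1) / K) {a..c}"
proof -
  have "((\<lambda>s. exp (K * (s - a))) has_integral
          exp (K * (c - a)) / K - exp (K * (a - a)) / K) {a..c}"
    using assms
    by (intro fundamental_theorem_of_calculus)
      (auto intro!: derivative_eq_intros simp: has_real_derivative_iff_has_vector_derivative[symmetric])
  then show ?thesis by (simp add: diff_divide_distrib)
qed

locale half_line_lipschitz_field =
  fixes a M L :: real and F :: "real \<Rightarrow> real \<Rightarrow> real"
  assumes continuous_on_field: "\<And>u. continuous_on {a..} u \<Longrightarrow> continuous_on {a..} (\<lambda>s. F s (u s))"
    and bounded_field: "\<And>t z. a \<le> t \<Longrightarrow> \<bar>F t z\<bar> \<le> M"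
    and lipschitz_field: "\<And>t x y. a \<le> t \<Longrightarrow> \<bar>F t x - F t y\<bar> \<le> L * \<bar>x - y\<bar>"
    and lipschitz_constant_pos: "L > 0"
begin

text \<open>The Picard operator acts on v = u / weight: the exponential weight (Bielecki's norm) makes it
  a 1/2-contraction, and clamping t to a makes its values bounded continuous functions on the
  whole line.\<close>

definition weight :: "real \<Rightarrow> real"
  where "weight t = exp (2 * L * (max a t - a))"

definition weighted_field :: "(real \<Rightarrow>\<^sub>C real) \<Rightarrow> real \<Rightarrow> real"
  where "weighted_field v s = F s (weight s * v s)"

definition picard :: "real \<Rightarrow> (real \<Rightarrow>\<^sub>C real) \<Rightarrow> real \<Rightarrow> real"
  where "picard z0 v t = (z0 + integral {a..max a t} (weighted_field v)) / weight t"

lemma weight_pos: "weight t > 0"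
  by (simp add: weight_def)

lemma continuous_on_weight: "continuous_on S weight"
  unfolding weight_def by (intro continuous_intros)

lemma continuous_on_weighted_field: "continuous_on {a..} (weighted_field v)"
  unfolding weighted_field_def
  by (rule continuous_on_field) (intro continuous_intros continuous_on_weight continuous_on_apply_bcontfun)

lemma weighted_field_integrable: "weighted_field v integrable_on {a..c}"
  by (rule integrable_continuous_interval, rule continuous_on_subset[OF continuous_on_weighted_field]) auto

lemma picard_in_bcontfun: "picard z0 v \<in> bcontfun"
proof (rule bcontfun_normI)
  show "continuous_on UNIV (picard z0 v)"
    unfolding picard_def using weight_pos
    by (intro continuous_intros continuous_on_integral_max continuous_on_weighted_field continuous_on_weight)
      (auto simp: less_imp_neq[symmetric])
next
  fix t
  define y where "y = max a t - a"
  have y: "y \<ge> 0" "weight t = exp (2 * L * y)"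
    by (auto simp: y_def weight_def)
  have M: "M \<ge> 0" using bounded_field[of a 0] by simp
  have "norm (integral {a..max a t} (weighted_field v)) \<le> integral {a..max a t} (\<lambda>_. M)"
    by (rule integral_norm_bound_integral[OF weighted_field_integrable])
      (auto simp: weighted_field_def intro!: bounded_field)
  then have I: "\<bar>integral {a..max a t} (weighted_field v)\<bar> \<le> M * y"
    by (simp add: y_def mult.commute)
  have "\<bar>picard z0 v t\<bar> \<le> (\<bar>z0\<bar> + M * y) / exp (2 * L * y)"
    unfolding picard_def y abs_divide using I abs_triangle_ineq[of z0 "integral {a..max a t} (weighted_field v)"]
    by (subst abs_of_pos[of "exp (2 * L * y)"], simp, intro divide_right_mono) auto
  also have "\<dots> = \<bar>z0\<bar> / exp (2 * L * y) + M * y / exp (2 * L * y)"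
    by (simp add: add_divide_distrib)
  also have "\<bar>z0\<bar> / exp (2 * L * y) \<le> \<bar>z0\<bar>"
    using y lipschitz_constant_pos by (simp add: divide_le_eq mult_le_cancel_left1)
  also have "M * y / exp (2 * L * y) \<le> M / (2 * L)"
  proof -
    have "2 * L * y \<le> exp (2 * L * y)"
      using exp_ge_add_one_self[of "2 * L * y"] by linarith
    then have "M * (2 * L * y) \<le> M * exp (2 * L * y)"
      by (rule mult_left_mono[OF _ M])
    then show ?thesis
      using lipschitz_constant_pos by (simp add: field_simps)
  qed
  finally show "norm (picard z0 v t) \<le> \<bar>z0\<bar> + M / (2 * L)" by simp
qed

lemma dist_picard_le: "dist (picard z0 v t) (picard z0 w t) \<le> dist v w / 2"
proof -
  define c where "c = max a t"
  define d where "d = dist v w"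
  have ac: "a \<le> c" and d: "d \<ge> 0" and wt: "weight t = exp (2 * L * (c - a))"
    by (auto simp: c_def d_def weight_def)
  have K: "2 * L > 0" using lipschitz_constant_pos by simp
  have exp_int: "((\<lambda>s. L * d * exp (2 * L * (s - a)))
      has_integral L * d * ((exp (2 * L * (c - a)) - 1) / (2 * L))) {a..c}"
    by (intro has_integral_mult_right exp_affine_has_integral K ac)
  have "norm (integral {a..c} (\<lambda>s. weighted_field v s - weighted_field w s))
      \<le> integral {a..c} (\<lambda>s. L * d * exp (2 * L * (s - a)))"
  proof (rule integral_norm_bound_integral)
    show "(\<lambda>s. weighted_field v s - weighted_field w s) integrable_on {a..c}"
      by (intro integrable_diff weighted_field_integrable)
    show "(\<lambda>s. L * d * exp (2 * L * (s - a))) integrable_on {a..c}"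
      using exp_int by blast
    fix s assume s: "s \<in> {a..c}"
    have "\<bar>weighted_field v s - weighted_field w s\<bar> \<le> L * \<bar>weight s * v s - weight s * w s\<bar>"
      unfolding weighted_field_def using s by (intro lipschitz_field) auto
    also have "\<dots> = L * weight s * \<bar>v s - w s\<bar>"
      using weight_pos[of s] lipschitz_constant_pos by (simp add: right_diff_distrib[symmetric] abs_mult)
    also have "\<dots> \<le> L * weight s * d"
      using dist_bounded[of v s w] weight_pos[of s] lipschitz_constant_pos
      by (intro mult_left_mono) (auto simp: d_def dist_real_def)
    finally show "norm (weighted_field v s - weighted_field w s) \<le> L * d * exp (2 * L * (s - a))"
      using s by (simp add: weight_def mult.commute mult.left_commute)
  qed
  also have "\<dots> = L * d * ((exp (2 * L * (c - a)) - 1) / (2 * L))"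
    using exp_int by blast
  also have "\<dots> \<le> L * d * (exp (2 * L * (c - a)) / (2 * L))"
    using lipschitz_constant_pos d by (intro mult_left_mono divide_right_mono) auto
  also have "\<dots> = d / 2 * weight t"
    using lipschitz_constant_pos by (simp add: wt)
  finally have "\<bar>integral {a..c} (\<lambda>s. weighted_field v s - weighted_field w s) / weight t\<bar> \<le> d / 2"
    using weight_pos[of t] by (simp add: abs_divide divide_le_eq)
  moreover have "picard z0 v t - picard z0 w t
      = integral {a..c} (\<lambda>s. weighted_field v s - weighted_field w s) / weight t"
    unfolding picard_def c_def
    by (simp add: integral_diff[OF weighted_field_integrable weighted_field_integrable] diff_divide_distrib add_divide_distrib)
  ultimately show ?thesis by (simp add: dist_real_def d_def)
qed

theorem solution_exists:
  "\<exists>u. u a = z0 \<and> (\<forall>t\<ge>a. (u has_real_derivative F t (u t)) (at t within {a..}))"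
proof -
  define T where "T v = Bcontfun (picard z0 v)" for v
  have T: "apply_bcontfun (T v) = picard z0 v" for v
    by (simp add: T_def Bcontfun_inverse picard_in_bcontfun)
  have "dist (T v) (T w) \<le> 1/2 * dist v w" for v w
    by (rule dist_bound) (use dist_picard_le in \<open>simp add: T\<close>)
  then obtain v where "T v = v"
    using banach_fix_type[of "1/2" T] by auto
  then have v: "picard z0 v t = v t" for t
    using T by metis
  define u where "u t = weight t * v t" for t
  have "weighted_field v = (\<lambda>s. F s (u s))"
    by (simp add: weighted_field_def u_def fun_eq_iff)
  then have u: "u t = z0 + integral {a..t} (\<lambda>s. F s (u s))" if "a \<le> t" for t
    using v[of t] that weight_pos[of t] by (simp add: u_def picard_def field_simps)
  have "continuous_on {a..} (\<lambda>s. F s (u s))"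
    unfolding u_def
    by (intro continuous_on_field continuous_intros continuous_on_weight continuous_on_apply_bcontfun)
  then have "((\<lambda>y. z0 + integral {a..y} (\<lambda>s. F s (u s))) has_real_derivative F t (u t)) (at t within {a..})"
    if "a \<le> t" for t
    using integral_atLeast_has_real_derivative that by (auto intro!: derivative_eq_intros)
  then have "(u has_real_derivative F t (u t)) (at t within {a..})" if "a \<le> t" for t
    by (rule has_field_derivative_transform_within[where d=1]) (use that u in auto)
  moreover have "u a = z0" using u[of a] by simp
  ultimately show ?thesis by blast
qed

end

lemma pos_near_zero_if_asymptotic:
  fixes \<zeta> :: "real \<Rightarrow> real" and \<gamma> e q \<delta> :: real
  assumes "\<gamma> > 0" "e < q" "\<delta> > 0"
    and asym: "\<And>\<phi>. \<phi> \<in> {0<..\<delta>} \<Longrightarrow> \<bar>\<zeta> \<phi> - \<gamma> * \<phi> powr e\<bar> \<le> \<phi> powr q"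
  obtains \<epsilon> where "0 < \<epsilon>" "\<epsilon> \<le> \<delta>" "\<And>\<phi>. \<phi> \<in> {0<..\<epsilon>} \<Longrightarrow> \<zeta> \<phi> > 0"
proof
  define \<epsilon> where "\<epsilon> = min \<delta> ((\<gamma> / 2) powr (1 / (q - e)))"
  show "0 < \<epsilon>" "\<epsilon> \<le> \<delta>"
    using assms by (auto simp: \<epsilon>_def)
  fix \<phi> assume \<phi>: "\<phi> \<in> {0<..\<epsilon>}"
  have "\<phi> powr (q - e) \<le> ((\<gamma> / 2) powr (1 / (q - e))) powr (q - e)"
    using \<phi> assms by (intro powr_mono2) (auto simp: \<epsilon>_def)
  also have "\<dots> = \<gamma> / 2"
    using assms by (simp add: powr_powr)
  finally have "\<phi> powr e * \<phi> powr (q - e) \<le> \<phi> powr e * (\<gamma> / 2)"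
    by (intro mult_left_mono) auto
  moreover have "\<phi> powr e * \<phi> powr (q - e) = \<phi> powr q"
    by (simp add: powr_add[symmetric])
  moreover have "\<phi> powr e * (\<gamma> / 2) < \<gamma> * \<phi> powr e"
    using assms \<phi> by simp
  moreover have "\<bar>\<zeta> \<phi> - \<gamma> * \<phi> powr e\<bar> \<le> \<phi> powr q"
    using asym \<phi> \<open>\<epsilon> \<le> \<delta>\<close> by auto
  ultimately show "\<zeta> \<phi> > 0" by linarith
qed

lemma pos_if_deriv_nonneg_where_pos:
  fixes g :: "real \<Rightarrow> real"
  assumes "a \<le> b" "continuous_on {a..b} g" "g a > 0"
    and deriv: "\<And>t. a < t \<Longrightarrow> t < b \<Longrightarrow> g t > 0 \<Longrightarrow> \<exists>d. (g has_real_derivative d) (at t) \<and> 0 \<le> d"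
  shows "g b > 0"
proof (rule ccontr)
  assume "\<not> g b > 0"
  define S where "S = {a..b} \<inter> g -` {..0}"
  have "closed S"
    unfolding S_def using assms(2) by (intro continuous_closed_preimage) auto
  moreover have "b \<in> S" "bdd_below S"
    using \<open>\<not> g b > 0\<close> assms(1) by (auto simp: S_def intro: bdd_belowI[of _ a])
  ultimately have "Inf S \<in> S"
    using closed_contains_Inf by blast
  then have t0: "a \<le> Inf S" "Inf S \<le> b" "g (Inf S) \<le> 0"
    by (auto simp: S_def)
  have pos: "g t > 0" if "a \<le> t" "t < Inf S" for t
  proof (rule ccontr)
    assume "\<not> g t > 0"
    then have "t \<in> S" using that t0 by (auto simp: S_def)
    then have "Inf S \<le> t" using \<open>bdd_below S\<close> by (rule cInf_lower)
    with that show False by simp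
  qed
  have "g a \<le> g (Inf S)"
  proof (rule DERIV_nonneg_imp_increasing_open[OF t0(1)])
    show "continuous_on {a..Inf S} g"
      by (rule continuous_on_subset[OF assms(2)]) (use t0 in auto)
  qed (use pos t0 deriv in auto)
  with t0 \<open>g a > 0\<close> show False by linarith
qed

lemma ode_solution_concat:
  fixes f :: "real \<Rightarrow> real \<Rightarrow> real" and g h :: "real \<Rightarrow> real"
  assumes "a < c" "a < x"
    and g: "\<And>x. x \<in> {a<..c} \<Longrightarrow> (g has_real_derivative f x (g x)) (at x within {a..c})"
    and h: "\<And>x. c \<le> x \<Longrightarrow> (h has_real_derivative f x (h x)) (at x within {c..})"
    and "h c = g c"
  defines "k \<equiv> \<lambda>x. if x \<le> c then g x else h x"
  shows "(k has_real_derivative f x (k x)) (at x)"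
proof -
  consider "x < c" | "c < x" | "x = c" by linarith
  then show ?thesis
  proof cases
    case 1
    have "at x within {a..c} = at x"
      using 1 \<open>a < x\<close> by (intro at_within_interior) auto
    then have "(g has_real_derivative f x (g x)) (at x)"
      using g[of x] 1 \<open>a < x\<close> by simp
    then have "(k has_real_derivative f x (g x)) (at x)"
      by (rule has_field_derivative_transform_within_open[where S="{a<..<c}"])
        (use 1 \<open>a < x\<close> in \<open>auto simp: k_def\<close>)
    then show ?thesis
      using 1 by (simp add: k_def)
  next
    case 2
    have "at x within {c..} = at x"
      using 2 by (intro at_within_interior) (simp add: interior_real_atLeast)
    then have "(h has_real_derivative f x (h x)) (at x)"
      using h[of x] 2 by simp
    then have "(k has_real_derivative f x (h x)) (at x)"
      by (rule has_field_derivative_transform_within_open[where S="{c<..}"])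
        (use 2 in \<open>auto simp: k_def\<close>)
    then show ?thesis
      using 2 by (simp add: k_def)
  next
    case 3
    have "(k has_real_derivative f c (g c)) (at c within {a..c})"
      by (rule has_field_derivative_transform_within[OF g[of c], where d=1])
        (use \<open>a < c\<close> in \<open>auto simp: k_def\<close>)
    moreover have "(k has_real_derivative f c (g c)) (at c within {c..})"
      by (rule has_field_derivative_transform_within[OF h[of c, unfolded \<open>h c = g c\<close>], where d=1])
        (use \<open>h c = g c\<close> in \<open>auto simp: k_def\<close>)
    ultimately have "(k has_real_derivative f c (g c)) (at c within {a..c} \<union> {c..})"
      unfolding has_field_derivative_iff Lim_within_Un by simp
    moreover have "{a..c} \<union> {c..} = {a..}"
      using \<open>a < c\<close> by auto
    moreover have "at c within {a..} = at c"
      using \<open>a < c\<close> by (intro at_within_interior) (simp add: interior_real_atLeast)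
    ultimately show ?thesis
      using 3 by (simp add: k_def)
  qed
qed

lemma powr_le_linear:
  fixes p \<delta> t :: real
  assumes "p \<le> 1" "0 < \<delta>" "\<delta> \<le> t"
  shows "t powr p \<le> \<delta> powr (p - 1) * t"
proof -
  have "t powr (p - 1) \<le> \<delta> powr (p - 1)"
    using assms by (intro powr_mono2') auto
  then have "t powr (p - 1) * t \<le> \<delta> powr (p - 1) * t"
    using assms by (intro mult_right_mono) auto
  then show ?thesis
    using assms by (simp add: powr_diff)
qed

text \<open>With A = \<alpha>^2, b = -\<beta> and c = \<alpha>(\<alpha> - 1) this is the right-hand side of the equation.\<close>

definition zeta_field :: "real \<Rightarrow> real \<Rightarrow> real \<Rightarrow> real \<Rightarrow> real \<Rightarrow> real \<Rightarrow> real"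
  where "zeta_field A b c p \<phi> z = (A * z + \<phi> powr p / z) / (c * \<phi> + b * z)"

lemma zeta_field_pos:
  assumes "A > 0" "b > 0" "c > 0" "\<phi> > 0" "z > 0"
  shows "zeta_field A b c p \<phi> z > 0"
  unfolding zeta_field_def using assms by (intro divide_pos_pos add_pos_nonneg) auto

lemma zeta_field_le:
  assumes "A > 0" "b > 0" "c > 0" "p \<le> 1" "0 < \<delta>" "\<delta> \<le> \<phi>" "0 < z0" "z0 \<le> z"
  shows "zeta_field A b c p \<phi> z \<le> A / b + \<delta> powr (p - 1) / (z0 * c)"
proof -
  define D where "D = c * \<phi> + b * z"
  have pos: "\<phi> > 0" "z > 0" "c * \<phi> > 0" "b * z > 0" using assms by auto
  then have D: "b * z \<le> D" "c * \<phi> \<le> D" "D > 0" by (auto simp: D_def)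
  have "zeta_field A b c p \<phi> z = A * z / D + \<phi> powr p / (z * D)"
    by (simp add: zeta_field_def D_def add_divide_distrib)
  also have "A * z / D \<le> A * z / (b * z)"
    using assms pos D by (intro divide_left_mono) auto
  also have "A * z / (b * z) = A / b"
    using pos by simp
  also have "\<phi> powr p / (z * D) \<le> (\<delta> powr (p - 1) * \<phi>) / (z0 * (c * \<phi>))"
    using assms pos D powr_le_linear[of p \<delta> \<phi>] by (intro frac_le mult_mono) auto
  also have "(\<delta> powr (p - 1) * \<phi>) / (z0 * (c * \<phi>)) = \<delta> powr (p - 1) / (z0 * c)"
    using pos by simp
  finally show ?thesis by simp
qed

lemma zeta_field_lipschitz:
  assumes "A > 0" "b > 0" "c > 0" "p \<le> 1" "0 < \<delta>" "\<delta> \<le> \<phi>"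
    and "0 < z0" "z0 \<le> z1" "z0 \<le> z2"
  shows "\<bar>zeta_field A b c p \<phi> z1 - zeta_field A b c p \<phi> z2\<bar>
    \<le> (A / (c * \<delta>) + 2 * \<delta> powr (p - 1) / (c * z0\<^sup>2)) * \<bar>z1 - z2\<bar>"
proof -
  define P where "P = \<phi> powr p"
  define D1 where "D1 = c * \<phi> + b * z1"
  define D2 where "D2 = c * \<phi> + b * z2"
  have pos: "\<phi> > 0" "z1 > 0" "z2 > 0" "c * \<phi> > 0" "P \<ge> 0"
    using assms by (auto simp: P_def)
  then have D: "c * \<phi> \<le> D1" "c * \<phi> \<le> D2" "D1 > 0" "D2 > 0"
    using assms by (auto simp: D1_def D2_def intro!: add_pos_pos)
  define T1 where "T1 = A * c * \<phi> / (D1 * D2)"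
  define T2 where "T2 = P * (c * \<phi> + b * z1 + b * z2) / (z1 * z2 * D1 * D2)"
  have ident: "zeta_field A b c p \<phi> z1 - zeta_field A b c p \<phi> z2 = (z1 - z2) * (T1 - T2)"
  proof -
    have "c * \<phi> + b * z1 \<noteq> 0" "c * \<phi> + b * z2 \<noteq> 0" "z1 \<noteq> 0" "z2 \<noteq> 0"
      using D pos by (auto simp: D1_def D2_def)
    then show ?thesis
      unfolding zeta_field_def T1_def T2_def P_def D1_def D2_def
      by (simp add: divide_simps) (simp add: algebra_simps)
  qed
  have T1: "0 \<le> T1" "T1 \<le> A / (c * \<delta>)"
  proof -
    show "0 \<le> T1" using assms pos D by (simp add: T1_def)
    have "T1 \<le> A * c * \<phi> / ((c * \<phi>) * (c * \<phi>))"
      unfolding T1_def using assms pos D by (intro divide_left_mono mult_mono) auto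
    also have "\<dots> = A / (c * \<phi>)" using pos by simp
    also have "\<dots> \<le> A / (c * \<delta>)" using assms by (intro divide_left_mono) auto
    finally show "T1 \<le> A / (c * \<delta>)" .
  qed
  have T2: "0 \<le> T2" "T2 \<le> 2 * \<delta> powr (p - 1) / (c * z0\<^sup>2)"
  proof -
    show "0 \<le> T2" using assms pos D by (simp add: T2_def)
    have "T2 \<le> P * (D1 + D2) / (z1 * z2 * D1 * D2)"
      unfolding T2_def using assms pos D
      by (intro divide_right_mono mult_left_mono) (auto simp: D1_def D2_def)
    also have "\<dots> = P / (z1 * z2 * D2) + P / (z1 * z2 * D1)"
      using pos D by (simp add: field_simps)
    also have "P / (z1 * z2 * D2) \<le> (\<delta> powr (p - 1) * \<phi>) / ((z0 * z0) * (c * \<phi>))"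
      using assms pos D powr_le_linear[of p \<delta> \<phi>] unfolding P_def
      by (intro frac_le mult_mono) auto
    also have "P / (z1 * z2 * D1) \<le> (\<delta> powr (p - 1) * \<phi>) / ((z0 * z0) * (c * \<phi>))"
      using assms pos D powr_le_linear[of p \<delta> \<phi>] unfolding P_def
      by (intro frac_le mult_mono) auto
    finally show "T2 \<le> 2 * \<delta> powr (p - 1) / (c * z0\<^sup>2)"
      using pos by (simp add: power2_eq_square)
  qed
  have "\<bar>T1 - T2\<bar> \<le> A / (c * \<delta>) + 2 * \<delta> powr (p - 1) / (c * z0\<^sup>2)"
    using T1 T2 by linarith
  from mult_right_mono[OF this abs_ge_zero[of "z1 - z2"]] show ?thesis
    unfolding ident abs_mult by (simp add: mult.commute)
qed

lemma zeta_field_solution_atLeast: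
  fixes A b c p \<delta> z0 :: real
  assumes "A > 0" "b > 0" "c > 0" "p \<le> 1" "\<delta> > 0" "z0 > 0"
  obtains u where "u \<delta> = z0"
    and "\<And>t. \<delta> \<le> t \<Longrightarrow> (u has_real_derivative zeta_field A b c p t (u t)) (at t within {\<delta>..})"
    and "\<And>t. \<delta> \<le> t \<Longrightarrow> z0 \<le> u t"
proof -
  \<comment> \<open>The truncation makes the field globally Lipschitz; the solution increases from z0,
      so it never sees it.\<close>
  define F where "F t z = zeta_field A b c p t (max z z0)" for t z
  have F_pos: "F t z > 0" if "\<delta> \<le> t" for t z
    unfolding F_def using assms that by (intro zeta_field_pos) auto
  interpret half_line_lipschitz_field \<delta> "A / b + \<delta> powr (p - 1) / (z0 * c)"
    "A / (c * \<delta>) + 2 * \<delta> powr (p - 1) / (c * z0\<^sup>2)" F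
  proof
    fix u :: "real \<Rightarrow> real" assume u: "continuous_on {\<delta>..} u"
    have "c * s + b * max (u s) z0 \<noteq> 0" if "s \<in> {\<delta>..}" for s
      using assms that by (intro order.strict_implies_not_eq[symmetric] add_pos_pos) auto
    then show "continuous_on {\<delta>..} (\<lambda>s. F s (u s))"
      unfolding F_def zeta_field_def using assms
      by (intro continuous_intros u continuous_on_powr') auto
  next
    fix t z assume "\<delta> \<le> t"
    then show "\<bar>F t z\<bar> \<le> A / b + \<delta> powr (p - 1) / (z0 * c)"
      using F_pos[of t z] zeta_field_le[of A b c p \<delta> t z0 "max z z0"] assms
      by (simp add: F_def)
  next
    fix t x y assume "\<delta> \<le> t"
    then have "\<bar>F t x - F t y\<bar>
        \<le> (A / (c * \<delta>) + 2 * \<delta> powr (p - 1) / (c * z0\<^sup>2)) * \<bar>max x z0 - max y z0\<bar>"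
      unfolding F_def using assms by (intro zeta_field_lipschitz) auto
    also have "\<dots> \<le> (A / (c * \<delta>) + 2 * \<delta> powr (p - 1) / (c * z0\<^sup>2)) * \<bar>x - y\<bar>"
      using assms by (intro mult_left_mono) (auto simp: max_def)
    finally show "\<bar>F t x - F t y\<bar> \<le> (A / (c * \<delta>) + 2 * \<delta> powr (p - 1) / (c * z0\<^sup>2)) * \<bar>x - y\<bar>" .
  next
    show "A / (c * \<delta>) + 2 * \<delta> powr (p - 1) / (c * z0\<^sup>2) > 0"
      using assms by (intro add_pos_nonneg) auto
  qed
  obtain u where u0: "u \<delta> = z0"
    and u: "\<And>t. \<delta> \<le> t \<Longrightarrow> (u has_real_derivative F t (u t)) (at t within {\<delta>..})"
    using solution_exists by blast
  have u_ge: "z0 \<le> u t" if "\<delta> \<le> t" for t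
  proof -
    have "u \<delta> \<le> u t"
    proof (rule DERIV_nonneg_imp_increasing_open[OF that])
      fix s assume s: "\<delta> < s" "s < t"
      have "at s within {\<delta>..} = at s"
        using s by (intro at_within_interior) (simp add: interior_real_atLeast)
      then show "\<exists>y. (u has_real_derivative y) (at s) \<and> 0 \<le> y"
        using u[of s] F_pos[of s "u s"] s by (intro exI[of _ "F s (u s)"]) auto
    next
      have "continuous_on {\<delta>..} u"
        unfolding continuous_on_eq_continuous_within using u by (auto intro: DERIV_continuous)
      then show "continuous_on {\<delta>..t} u"
        by (rule continuous_on_subset) auto
    qed
    with u0 show ?thesis by simp
  qed
  have "F t (u t) = zeta_field A b c p t (u t)" if "\<delta> \<le> t" for t
    using u_ge[OF that] by (simp add: F_def)
  then show ?thesis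
    using that u0 u u_ge by simp
qed

lemma zeta_field_solution_pos:
  fixes \<zeta> :: "real \<Rightarrow> real" and A b c p \<gamma> e q \<delta> x :: real
  assumes coeffs: "A > 0" "b > 0" "c > 0" and "\<gamma> > 0" "e < q" "\<delta> > 0"
    and cont: "continuous_on {0..\<delta>} \<zeta>"
    and asym: "\<And>\<phi>. \<phi> \<in> {0<..\<delta>} \<Longrightarrow> \<bar>\<zeta> \<phi> - \<gamma> * \<phi> powr e\<bar> \<le> \<phi> powr q"
    and ode: "\<And>\<phi>. \<phi> \<in> {0<..\<delta>} \<Longrightarrow>
      (\<zeta> has_real_derivative zeta_field A b c p \<phi> (\<zeta> \<phi>)) (at \<phi> within {0..\<delta>})"
    and x: "x \<in> {0<..\<delta>}"
  shows "\<zeta> x > 0"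
proof -
  obtain \<epsilon> where \<epsilon>: "0 < \<epsilon>" "\<epsilon> \<le> \<delta>" and near0: "\<And>\<phi>. \<phi> \<in> {0<..\<epsilon>} \<Longrightarrow> \<zeta> \<phi> > 0"
    using pos_near_zero_if_asymptotic[OF \<open>\<gamma> > 0\<close> \<open>e < q\<close> \<open>\<delta> > 0\<close> asym] by blast
  show ?thesis
  proof (cases "x \<le> \<epsilon>")
    case True
    then show ?thesis using near0 x by simp
  next
    case False
    have cont_\<epsilon>: "continuous_on {\<epsilon>..x} \<zeta>"
      by (rule continuous_on_subset[OF cont]) (use \<epsilon> x in auto)
    have deriv: "\<exists>d. (\<zeta> has_real_derivative d) (at t) \<and> 0 \<le> d"
      if t: "\<epsilon> < t" "t < x" "\<zeta> t > 0" for t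
    proof -
      have "at t within {0..\<delta>} = at t"
        using t \<epsilon> x by (intro at_within_interior) auto
      then have "(\<zeta> has_real_derivative zeta_field A b c p t (\<zeta> t)) (at t)"
        using ode[of t] t \<epsilon> x by simp
      moreover have "zeta_field A b c p t (\<zeta> t) > 0"
        using coeffs t \<epsilon> by (intro zeta_field_pos) auto
      ultimately show ?thesis
        by (blast intro: less_imp_le)
    qed
    show ?thesis
      using pos_if_deriv_nonneg_where_pos[OF _ cont_\<epsilon> near0[of \<epsilon>] deriv] False \<epsilon> by simp
  qed
qed

theorem proposition7p2:
  fixes p \<beta> q \<delta> :: real and \<zeta> :: "real \<Rightarrow> real"
  assumes hp: "0 < p" "p < 1/2"
    and h\<beta>: "\<beta> < 0"
    and hq: "(p + 1) / 3 < q" "q < 1"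
    and h\<delta>: "\<delta> > 0"
    and hcont: "continuous_on {0..\<delta>} \<zeta>"
    and h0: "\<zeta> 0 = 0"
    and hbound: "\<forall>\<phi>\<in>{0..\<delta>}.
        \<bar>\<zeta> \<phi> - (3 / (\<bar>\<beta>\<bar> * (p + 1))) powr (1/3) * \<phi> powr ((p + 1) / 3)\<bar> \<le> \<phi> powr q"
    and hode: "\<forall>\<phi>\<in>{0<..\<delta>}.
        (\<zeta> has_real_derivative
          (((2 / (2 - p))\<^sup>2 * \<zeta> \<phi> + \<phi> powr p / \<zeta> \<phi>) /
           ((2 / (2 - p)) * ((2 / (2 - p)) - 1) * \<phi> - \<beta> * \<zeta> \<phi>)))
        (at \<phi> within {0..\<delta>})"
  shows "\<exists>Z :: real \<Rightarrow> real.
           (\<forall>\<phi>\<in>{0<..\<delta>}. Z \<phi> = \<zeta> \<phi>) \<and>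
           (\<forall>\<phi>>0. (Z has_real_derivative
              (((2 / (2 - p))\<^sup>2 * Z \<phi> + \<phi> powr p / Z \<phi>) /
               ((2 / (2 - p)) * ((2 / (2 - p)) - 1) * \<phi> - \<beta> * Z \<phi>))) (at \<phi>)) \<and>
           (\<forall>\<phi>>0. Z \<phi> > 0) \<and>
           mono_on {0<..} Z"
proof -
  define \<alpha> where "\<alpha> = 2 / (2 - p)"
  define f where "f = zeta_field (\<alpha>\<^sup>2) (- \<beta>) (\<alpha> * (\<alpha> - 1)) p"
  have "\<alpha> > 1"
    using hp by (simp add: \<alpha>_def field_simps)
  then have coeffs: "\<alpha>\<^sup>2 > 0" "- \<beta> > 0" "\<alpha> * (\<alpha> - 1) > 0"
    using h\<beta> by auto
  have f_eq: "((2 / (2 - p))\<^sup>2 * z + \<phi> powr p / z) / ((2 / (2 - p)) * ((2 / (2 - p)) - 1) * \<phi> - \<beta> * z)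
      = f \<phi> z" for \<phi> z
    by (simp add: f_def zeta_field_def \<alpha>_def)
  have ode: "(\<zeta> has_real_derivative f \<phi> (\<zeta> \<phi>)) (at \<phi> within {0..\<delta>})" if "\<phi> \<in> {0<..\<delta>}" for \<phi>
    using hode[unfolded f_eq] that by blast
  have \<gamma>: "(3 / (\<bar>\<beta>\<bar> * (p + 1))) powr (1/3) > 0"
    using hp h\<beta> by simp
  have \<zeta>_pos: "\<zeta> \<phi> > 0" if "\<phi> \<in> {0<..\<delta>}" for \<phi>
    using zeta_field_solution_pos[OF coeffs \<gamma> hq(1) h\<delta> hcont _ ode[unfolded f_def] that] hbound
    by force
  obtain u where u: "u \<delta> = \<zeta> \<delta>"
    "\<And>t. \<delta> \<le> t \<Longrightarrow> (u has_real_derivative f t (u t)) (at t within {\<delta>..})"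
    "\<And>t. \<delta> \<le> t \<Longrightarrow> \<zeta> \<delta> \<le> u t"
    by (rule zeta_field_solution_atLeast[OF coeffs, of p \<delta> "\<zeta> \<delta>", folded f_def])
      (use hp h\<delta> \<zeta>_pos[of \<delta>] in auto)
  define Z where "Z \<phi> = (if \<phi> \<le> \<delta> then \<zeta> \<phi> else u \<phi>)" for \<phi>
  have Z_deriv: "(Z has_real_derivative f \<phi> (Z \<phi>)) (at \<phi>)" if "\<phi> > 0" for \<phi>
    unfolding Z_def using ode_solution_concat[OF h\<delta> that ode u(2) u(1)] by simp
  have Z_pos: "Z \<phi> > 0" if "\<phi> > 0" for \<phi>
    using \<zeta>_pos[of \<phi>] \<zeta>_pos[of \<delta>] u(3)[of \<phi>] that h\<delta> by (auto simp: Z_def)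
  have "f \<phi> (Z \<phi>) > 0" if "\<phi> > 0" for \<phi>
    unfolding f_def using coeffs Z_pos that by (intro zeta_field_pos) auto
  then have "mono_on {0<..} Z"
    using Z_deriv
    by (intro mono_onI deriv_nonneg_imp_mono[where g=Z and g'="\<lambda>\<phi>. f \<phi> (Z \<phi>)"])
      (auto intro: less_imp_le)
  moreover have "\<forall>\<phi>\<in>{0<..\<delta>}. Z \<phi> = \<zeta> \<phi>"
    by (simp add: Z_def)
  ultimately show ?thesis
    using Z_deriv Z_pos by (intro exI[of _ Z] conjI allI impI) (simp_all only: f_eq)
qed

end
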